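(* Let $(\mathcal{S},h_{ij},K_{ij})$ be an initial data set of the vacuum Einstein field equations with inner boundary $\partial\mathcal{S}$ and unit normal $\rho^i$. The boundary value problem consisting of $\mathscr{P}\circ\mathscr{P}^*(X,X_i)=(0,0)$ on $\mathcal{S}$ together with the boundary operators $X$, $\Delta_hX$, $X_i$, $\partial_\rho X_i$ on $\partial\mathcal{S}$ satisfies the Lopatinskij--Shapiro condition.
   Context: An initial data set is $(\mathcal{S},h_{ij},K_{ij})$ with $h$ Riemannian (connection $D$, Ricci $r_{ij}$, scalar curvature $r$, $\Delta_h=D^iD_i$), $K_{ij}$ symmetric with $K=h^{ij}K_{ij}$, satisfying $r+K^2-K_{ij}K^{ij}=0$, $D^jK_{ij}-D_iK=0$. With $F_{ij}=2X(Kh_{ij}-K_{ij})$, $H_{ij}=2X(K^k{}_iK_{jk}-KK_{ij})-K_{k(i}D_{j)}X^k+\tfrac12K_{ij}D_kX^k+\tfrac12K_{kl}D^kX^lh_{ij}-\tfrac12X^kD_kK_{ij}+\tfrac12X^kD_kKh_{ij}$, $\bar\gamma_{ij}=D_iD_jX-Xr_{ij}-\Delta_hXh_{ij}+H_{ij}$, $\bar Q_{ij}=-\Delta_h(D_{(i}X_{j)}-D^kX_kh_{ij}+F_{ij})$, traces $\bar\gamma,\bar Q$, $\bar H=2(K\bar Q-K^{ij}\bar Q_{ij})+2(K^{ki}K^j{}_k-KK^{ij})\bar\gamma_{ij}$, $\bar F_i=(D_iK^{kj}-D^kK^j{}_i)\bar\gamma_{jk}-(K^k{}_iD^j-\tfrac12K^{kj}D_i)\bar\gamma_{jk}+\tfrac12K^k{}_iD_k\bar\gamma$,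 the approximate Killing operator is $\mathscr{P}\circ\mathscr{P}^*(X,X_i)=\big(2\Delta_h\Delta_hX-r^{ij}D_iD_jX+2r\Delta_hX+\tfrac32D^irD_iX+(\tfrac12\Delta_hr+r_{ij}r^{ij})X+D^iD^jH_{ij}-\Delta_hH_k{}^k-r^{ij}H_{ij}+\bar H,\ D^j\Delta_hD_{(i}X_{j)}+D_i\Delta_hD^kX_k+D^j\Delta_hF_{ij}-D_i\Delta_hF_k{}^k-\bar F_i\big)$. Lopatinskij--Shapiro condition: keep only the principal (highest-order) parts of the interior operator and of the boundary operators. Fix a boundary point $x_*$, choose coordinates with $x^1=\rho$ along the normal, freeze coefficients at $x_*$, and replace $\partial_1\to d/d\rho$, $\partial_j\to \mathrm{i}\xi_j$ ($j\ge2$) with $\vec\xi\neq0$. The pair (operator, boundary operators) satisfies the LS condition if, at every boundary point and every $\vec\xi\neq0$, the only solution of the resulting ODE system with homogeneous boundary conditions at $\rho=0$ which tends to $0$ as $\rho\to\infty$ is the trivial one. *)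

theory Defs
  imports "HOL-Analysis.Analysis"
begin

text \<open>Frozen-coefficient model of the Lopatinskij--Shapiro test problem on a 3-dimensional
initial data set.  Coordinates are indexed by 0,1,2; index 0 is the coordinate along the
normal (the ODE variable rho), indices 1,2 are tangential with dual variables xi 1, xi 2.
G is the inverse metric h^{ij} frozen at the boundary point.\<close>

definition dop :: "(nat \<Rightarrow> real) \<Rightarrow> nat \<Rightarrow> (real \<Rightarrow> complex) \<Rightarrow> (real \<Rightarrow> complex)" where
  "dop \<xi> i (f :: real \<Rightarrow> complex) = (if i = 0 then (\<lambda>r. vector_derivative f (at r)) else (\<lambda>r. \<i> * complex_of_real (\<xi> i) * f r))"

definition lap :: "(nat \<Rightarrow> nat \<Rightarrow> real) \<Rightarrow> (nat \<Rightarrow> real) \<Rightarrow> (real \<Rightarrow> complex) \<Rightarrow> (real \<Rightarrow> complex)" where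
  "lap G \<xi> (f :: real \<Rightarrow> complex) = (\<lambda>r. \<Sum>i<3. \<Sum>j<3. complex_of_real (G i j) * dop \<xi> i (dop \<xi> j f) r)"

text \<open>Principal part of the scalar component: 2 Delta_h Delta_h X.\<close>
definition Pscal :: "(nat \<Rightarrow> nat \<Rightarrow> real) \<Rightarrow> (nat \<Rightarrow> real) \<Rightarrow> (real \<Rightarrow> complex) \<Rightarrow> (real \<Rightarrow> complex)" where
  "Pscal G \<xi> (X :: real \<Rightarrow> complex) = (\<lambda>r. 2 * lap G \<xi> (lap G \<xi> X) r)"

text \<open>Principal part of the covector component:
  D^j Delta_h D_(i X_j) + D_i Delta_h D^k X_k.\<close>
definition Pvec :: "(nat \<Rightarrow> nat \<Rightarrow> real) \<Rightarrow> (nat \<Rightarrow> real) \<Rightarrow> (nat \<Rightarrow> real \<Rightarrow> complex) \<Rightarrow> nat \<Rightarrow> (real \<Rightarrow> complex)" where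
  "Pvec G \<xi> Xs i = (\<lambda>r.
     (\<Sum>j<3. \<Sum>l<3. complex_of_real (G j l) *
        dop \<xi> l (lap G \<xi> (\<lambda>s. (dop \<xi> i (Xs j) s + dop \<xi> j (Xs i) s) / 2)) r)
     + dop \<xi> i (lap G \<xi> (\<lambda>s. \<Sum>k<3. \<Sum>l<3. complex_of_real (G k l) * dop \<xi> k (Xs l) s)) r)"

text \<open>Normal derivative rho^j d_j with rho^j = h^{j0} / sqrt(h^{00}) (unit normal).\<close>
definition nder :: "(nat \<Rightarrow> nat \<Rightarrow> real) \<Rightarrow> (nat \<Rightarrow> real) \<Rightarrow> (real \<Rightarrow> complex) \<Rightarrow> (real \<Rightarrow> complex)" where
  "nder G \<xi> (f :: real \<Rightarrow> complex) = (\<lambda>r. \<Sum>j<3. complex_of_real (G j 0 / sqrt (G 0 0)) * dop \<xi> j f r)"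

definition smooth_fun :: "(real \<Rightarrow> complex) \<Rightarrow> bool" where
  "smooth_fun (f :: real \<Rightarrow> complex) \<longleftrightarrow> (\<forall>k r. ((\<lambda>g t. vector_derivative g (at t)) ^^ k) f differentiable (at r))"

definition inv_metric :: "(nat \<Rightarrow> nat \<Rightarrow> real) \<Rightarrow> bool" where
  "inv_metric G \<longleftrightarrow> (\<forall>i<3. \<forall>j<3. G i j = G j i) \<and>
     (\<forall>v :: nat \<Rightarrow> real. (\<exists>i<3. v i \<noteq> 0) \<longrightarrow> (\<Sum>i<3. \<Sum>j<3. G i j * v i * v j) > 0)"

end

theory Submission
  imports Defs "HOL-Computational_Algebra.Polynomial" "HOL-Real_Asymp.Real_Asymp"
begin

(* With frozen coefficients every operator acts on functions of \<rho> as p(d/d\<rho>) for a complex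
   polynomial p, its symbol.  In normal coordinates the Laplacian has symbol
   \<Lambda> = a (x - \<mu>) (x + \<mu>) with a = h^00 > 0 and \<mu> > 0 since \<xi> \<noteq> 0.  The scalar equation is
   \<Lambda>\<^sup>2 X = 0.  Twice the vector equation reads \<Lambda>\<^sup>2 X_i + 3 D_i \<Lambda> (div X); contracting with D^i gives
   4 \<Lambda>\<^sup>2 (div X), hence \<Lambda>\<^sup>3 X_i = 0.  A decaying solution of \<Lambda>\<^sup>n f = 0 on (0, \<infinity>) is
   B(\<rho>) e^(-\<mu>\<rho>) with deg B < n, and p(d/d\<rho>) acts on it through a polynomial operator on B.
   The boundary conditions remove the constant and linear coefficients of B, which settles X;
   for the vector, the equation with i = 0 then forces the quadratic coefficients of X_0 and of
   div X to vanish, after which each remaining equation reads \<Lambda>\<^sup>2 X_i = 0. *)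

section \<open>Constant-coefficient differential operators\<close>

abbreviation nth_vderiv :: "nat \<Rightarrow> (real \<Rightarrow> complex) \<Rightarrow> real \<Rightarrow> complex" where
  "nth_vderiv n f \<equiv> ((\<lambda>g t. vector_derivative g (at t)) ^^ n) f"

lemma nth_vderiv_nth_vderiv: "nth_vderiv k (nth_vderiv n f) = nth_vderiv (k + n) f"
  by (simp add: funpow_add)

lemma smooth_fun_nth_vderiv: "smooth_fun f \<Longrightarrow> smooth_fun (nth_vderiv n f)"
  unfolding smooth_fun_def by (simp add: nth_vderiv_nth_vderiv)

lemma smooth_fun_has_vector_derivative:
  "smooth_fun f \<Longrightarrow> (f has_vector_derivative vector_derivative f (at r)) (at r)"
  unfolding smooth_fun_def by (metis funpow_0 vector_derivative_works)

lemma nth_vderiv_lincomb: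
  assumes "finite S" "\<And>x. x \<in> S \<Longrightarrow> smooth_fun (F x)"
  shows "nth_vderiv k (\<lambda>r. \<Sum>x\<in>S. c x * F x r) = (\<lambda>r. \<Sum>x\<in>S. c x * nth_vderiv k (F x) r)"
proof (induction k)
  case (Suc k)
  have "((\<lambda>r. \<Sum>x\<in>S. c x * nth_vderiv k (F x) r) has_vector_derivative
          (\<Sum>x\<in>S. c x * nth_vderiv (Suc k) (F x) t)) (at t)" for t
    using smooth_fun_has_vector_derivative[OF smooth_fun_nth_vderiv[OF assms(2)]]
    by (auto intro!: has_vector_derivative_sum has_vector_derivative_mult_right)
  then have "vector_derivative (\<lambda>r. \<Sum>x\<in>S. c x * nth_vderiv k (F x) r) (at t) =
      (\<Sum>x\<in>S. c x * nth_vderiv (Suc k) (F x) t)" for t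
    by (rule vector_derivative_at)
  then show ?case
    by (simp only: funpow.simps o_apply Suc.IH)
qed simp

lemma smooth_fun_lincomb:
  assumes "finite S" "\<And>x. x \<in> S \<Longrightarrow> smooth_fun (F x)"
  shows "smooth_fun (\<lambda>r. \<Sum>x\<in>S. c x * F x r)"
proof -
  have "((\<lambda>r. \<Sum>x\<in>S. c x * nth_vderiv k (F x) r) has_vector_derivative
          (\<Sum>x\<in>S. c x * nth_vderiv (Suc k) (F x) t)) (at t)" for k t
    using smooth_fun_has_vector_derivative[OF smooth_fun_nth_vderiv[OF assms(2)]]
    by (auto intro!: has_vector_derivative_sum has_vector_derivative_mult_right)
  then have "(\<lambda>r. \<Sum>x\<in>S. c x * nth_vderiv k (F x) r) differentiable at t" for k t
    by (rule differentiableI_vector)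
  then show ?thesis
    by (simp add: smooth_fun_def nth_vderiv_lincomb[OF assms])
qed

lemma smooth_fun_sum:
  assumes "finite S" "\<And>x. x \<in> S \<Longrightarrow> smooth_fun (F x)"
  shows "smooth_fun (\<lambda>r. \<Sum>x\<in>S. F x r)"
  using smooth_fun_lincomb[OF assms, where c = "\<lambda>_. 1"] by simp

lemma nth_vderiv_sum:
  assumes "finite S" "\<And>x. x \<in> S \<Longrightarrow> smooth_fun (F x)"
  shows "nth_vderiv k (\<lambda>r. \<Sum>x\<in>S. F x r) = (\<lambda>r. \<Sum>x\<in>S. nth_vderiv k (F x) r)"
  using nth_vderiv_lincomb[OF assms, where c = "\<lambda>_. 1"] by simp

lemma nth_vderiv_cong_pos:
  assumes "\<forall>r>0. f r = g r" and "r > 0"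
  shows "nth_vderiv n f r = nth_vderiv n g r"
  using assms(2)
proof (induction n arbitrary: r)
  case (Suc n)
  have "\<forall>\<^sub>F s in nhds r. s \<in> UNIV \<longrightarrow> nth_vderiv n f s = nth_vderiv n g s"
    using eventually_nhds_in_open[of "{0<..}" r] Suc by (auto elim!: eventually_mono)
  from vector_derivative_cong_eq[OF this refl refl UNIV_I] show ?case
    by simp
qed (use assms in simp)

lemma nth_vderiv_cong_nonneg:
  assumes "smooth_fun f" "smooth_fun g" "\<forall>r>0. f r = g r" and "r \<ge> 0"
  shows "nth_vderiv n f r = nth_vderiv n g r"
proof (cases "r = 0")
  case True
  have lim: "(nth_vderiv n h \<longlongrightarrow> nth_vderiv n h 0) (at_right 0)" if "smooth_fun h" for h
    using smooth_fun_has_vector_derivative[OF smooth_fun_nth_vderiv[OF that]]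
    by (metis continuous_at_imp_continuous_within continuous_within has_vector_derivative_continuous)
  have "\<forall>\<^sub>F s in at_right 0. nth_vderiv n g s = nth_vderiv n f s"
    using assms(3) by (auto simp: eventually_at_right_field intro!: exI[of _ 1] nth_vderiv_cong_pos)
  with lim[OF assms(2)] have "(nth_vderiv n f \<longlongrightarrow> nth_vderiv n g 0) (at_right 0)"
    by (rule Lim_transform_eventually)
  with lim[OF assms(1)] show ?thesis
    using True tendsto_unique[OF trivial_limit_at_right_real] by blast
qed (use assms nth_vderiv_cong_pos in auto)

definition diffop :: "complex poly \<Rightarrow> (real \<Rightarrow> complex) \<Rightarrow> real \<Rightarrow> complex" where
  "diffop p f = (\<lambda>r. \<Sum>n\<le>degree p. coeff p n * nth_vderiv n f r)"

lemma diffop_eq_sum_atMost: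
  "degree p \<le> N \<Longrightarrow> diffop p f r = (\<Sum>n\<le>N. coeff p n * nth_vderiv n f r)"
  unfolding diffop_def by (rule sum.mono_neutral_left) (auto simp: coeff_eq_0)

lemma diffop_add: "diffop (p + q) f r = diffop p f r + diffop q f r"
proof -
  have "degree (p + q) \<le> max (degree p) (degree q)"
    by (rule degree_add_le) auto
  then show ?thesis
    by (simp add: diffop_eq_sum_atMost[of _ "max (degree p) (degree q)"] sum.distrib distrib_right)
qed

lemma diffop_smult: "diffop (smult c p) f r = c * diffop p f r"
  by (simp add: diffop_eq_sum_atMost[of _ "degree p"] sum_distrib_left mult.assoc)

lemma diffop_0 [simp]: "diffop 0 f r = 0"
  by (simp add: diffop_def)

lemma diffop_sum: "finite S \<Longrightarrow> diffop (\<Sum>x\<in>S. P x) f r = (\<Sum>x\<in>S. diffop (P x) f r)"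
  by (induction S rule: finite_induct) (auto simp: diffop_add)

lemma diffop_diff: "diffop (p - q) f r = diffop p f r - diffop q f r"
  using diffop_add[of p "- q" f r] diffop_smult[of "- 1" q f r] by simp

lemma diffop_const: "diffop [:c:] f r = c * f r"
  by (simp add: diffop_def)

lemma diffop_const_1: "diffop [:1:] f = f"
  by (simp add: fun_eq_iff diffop_const)

lemma smooth_fun_diffop: "smooth_fun f \<Longrightarrow> smooth_fun (diffop p f)"
  unfolding diffop_def by (rule smooth_fun_lincomb) (auto intro: smooth_fun_nth_vderiv)

lemma vector_derivative_diffop:
  assumes "smooth_fun f"
  shows "vector_derivative (diffop p f) (at r) = diffop (pCons 0 p) f r"
proof -
  have "vector_derivative (diffop p f) (at r) = nth_vderiv 1 (diffop p f) r"
    by simp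
  also have "\<dots> = (\<Sum>n\<le>degree p. coeff p n * nth_vderiv (Suc n) f r)"
    unfolding diffop_def
    by (subst nth_vderiv_lincomb) (auto intro: smooth_fun_nth_vderiv assms simp: nth_vderiv_nth_vderiv)
  also have "\<dots> = (\<Sum>n\<le>Suc (degree p). coeff (pCons 0 p) n * nth_vderiv n f r)"
    by (subst sum.atMost_Suc_shift) simp
  also have "\<dots> = diffop (pCons 0 p) f r"
    by (rule diffop_eq_sum_atMost[symmetric]) (rule degree_pCons_le)
  finally show ?thesis .
qed

lemma diffop_pCons:
  "smooth_fun f \<Longrightarrow> diffop (pCons a p) f r = a * f r + vector_derivative (diffop p f) (at r)"
  using diffop_add[of "[:a:]" "pCons 0 p" f r] by (simp add: diffop_const vector_derivative_diffop)

lemma diffop_mult: "smooth_fun f \<Longrightarrow> diffop (p * q) f = diffop p (diffop q f)"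
proof (induction p)
  case (pCons a p)
  have "diffop (pCons a p * q) f r = diffop (pCons a p) (diffop q f) r" for r
  proof -
    have "diffop (pCons a p * q) f r = a * diffop q f r + diffop (pCons 0 (p * q)) f r"
      by (simp add: diffop_add diffop_smult)
    also have "\<dots> = a * diffop q f r + vector_derivative (diffop p (diffop q f)) (at r)"
      using pCons by (simp add: vector_derivative_diffop[symmetric])
    also have "\<dots> = diffop (pCons a p) (diffop q f) r"
      using pCons by (simp add: diffop_pCons smooth_fun_diffop)
    finally show ?thesis .
  qed
  then show ?case by (simp add: fun_eq_iff)
qed (simp add: diffop_def fun_eq_iff)

lemma diffop_cong_pos: "\<forall>s>0. f s = g s \<Longrightarrow> r > 0 \<Longrightarrow> diffop p f r = diffop p g r"
  using nth_vderiv_cong_pos[of f g] by (simp add: diffop_def)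

lemma diffop_vanish_pos:
  assumes "\<forall>s>0. g s = 0" "r > 0"
  shows "diffop p g r = 0"
proof -
  have "nth_vderiv n (\<lambda>_. 0) = (\<lambda>_. 0)" for n
    by (induction n) auto
  then show ?thesis
    using diffop_cong_pos[of g "\<lambda>_. 0"] assms by (simp add: diffop_def)
qed

lemma diffop_cong_nonneg:
  "smooth_fun f \<Longrightarrow> smooth_fun g \<Longrightarrow> \<forall>r>0. f r = g r \<Longrightarrow> r \<ge> 0 \<Longrightarrow>
    diffop p f r = diffop p g r"
  using nth_vderiv_cong_nonneg[of f g] by (simp add: diffop_def)

section \<open>Symbols of the frozen operators\<close>

definition partial_symb :: "(nat \<Rightarrow> real) \<Rightarrow> nat \<Rightarrow> complex poly" where
  "partial_symb \<xi> l = (if l = 0 then [:0, 1:] else [:\<i> * complex_of_real (\<xi> l):])"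

lemma dop_eq_diffop:
  assumes "smooth_fun f"
  shows "dop \<xi> l f = diffop (partial_symb \<xi> l) f"
proof -
  have "diffop [:0, 1:] f r = vector_derivative f (at r)" for r
    using diffop_pCons[OF assms, of 0 "[:1:]" r] by (simp add: diffop_const_1)
  then show ?thesis
    by (auto simp: dop_def partial_symb_def diffop_const)
qed

definition lap_symb :: "(nat \<Rightarrow> nat \<Rightarrow> real) \<Rightarrow> (nat \<Rightarrow> real) \<Rightarrow> complex poly" where
  "lap_symb G \<xi> = (\<Sum>j<3. \<Sum>l<3. [:complex_of_real (G j l):] * partial_symb \<xi> j * partial_symb \<xi> l)"

definition raised_symb :: "(nat \<Rightarrow> nat \<Rightarrow> real) \<Rightarrow> (nat \<Rightarrow> real) \<Rightarrow> nat \<Rightarrow> complex poly" where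
  "raised_symb G \<xi> m = (\<Sum>l<3. [:complex_of_real (G m l):] * partial_symb \<xi> l)"

lemma lap_eq_diffop: "smooth_fun f \<Longrightarrow> lap G \<xi> f = diffop (lap_symb G \<xi>) f"
  by (simp add: lap_def lap_symb_def fun_eq_iff dop_eq_diffop smooth_fun_diffop diffop_mult
      diffop_sum diffop_smult mult.assoc)

lemma lap_symb_eq_contraction: "lap_symb G \<xi> = (\<Sum>j<3. partial_symb \<xi> j * raised_symb G \<xi> j)"
  unfolding lap_symb_def raised_symb_def by (simp add: sum_distrib_left mult_ac)

(* Twice the symbol of Pvec, which avoids the factor 1/2. *)
definition vec_symb :: "(nat \<Rightarrow> nat \<Rightarrow> real) \<Rightarrow> (nat \<Rightarrow> real) \<Rightarrow> nat \<Rightarrow> nat \<Rightarrow> complex poly" where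
  "vec_symb G \<xi> i m = 3 * partial_symb \<xi> i * lap_symb G \<xi> * raised_symb G \<xi> m
     + (if m = i then lap_symb G \<xi> ^ 2 else 0)"

(* The left-hand side is the symbol of 2 Pvec as read off from its definition. *)
lemma vec_symb_expand:
  assumes "m < 3"
  shows "(\<Sum>j<3. \<Sum>l<3. [:complex_of_real (G j l):] * (partial_symb \<xi> l * (lap_symb G \<xi> *
            ((if m = j then partial_symb \<xi> i else 0) + (if m = i then partial_symb \<xi> j else 0)))))
        + 2 * (partial_symb \<xi> i * (lap_symb G \<xi> * raised_symb G \<xi> m)) = vec_symb G \<xi> i m"
proof -
  let ?L = "lap_symb G \<xi>"
  have "m = 0 \<or> m = 1 \<or> m = 2" using assms by auto
  then have "(\<Sum>j<3. \<Sum>l<3. [:complex_of_real (G j l):] *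
        (partial_symb \<xi> l * (?L * (if m = j then partial_symb \<xi> i else 0))))
     = partial_symb \<xi> i * ?L * raised_symb G \<xi> m"
    by (elim disjE) (simp_all add: eval_nat_numeral raised_symb_def algebra_simps)
  moreover have "(\<Sum>j<3. \<Sum>l<3. [:complex_of_real (G j l):] *
        (partial_symb \<xi> l * (L * (if m = i then partial_symb \<xi> j else 0))))
     = (if m = i then L * ?L else 0)" for L
    by (simp add: lap_symb_def sum_distrib_left mult_ac)
  ultimately show ?thesis
    by (simp add: vec_symb_def power2_eq_square sum.distrib algebra_simps)
qed

lemma vec_symb_contraction:
  assumes "m < 3"
  shows "(\<Sum>j<3. raised_symb G \<xi> j * vec_symb G \<xi> j m) = 4 * lap_symb G \<xi> ^ 2 * raised_symb G \<xi> m"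
proof -
  have "m = 0 \<or> m = 1 \<or> m = 2" using assms by auto
  then have "(\<Sum>j<3. raised_symb G \<xi> j * vec_symb G \<xi> j m)
      = 3 * lap_symb G \<xi> * raised_symb G \<xi> m * (\<Sum>j<3. partial_symb \<xi> j * raised_symb G \<xi> j)
        + raised_symb G \<xi> m * lap_symb G \<xi> ^ 2"
    by (elim disjE) (simp_all add: vec_symb_def eval_nat_numeral algebra_simps)
  then show ?thesis
    by (simp add: lap_symb_eq_contraction[symmetric] power2_eq_square algebra_simps)
qed

definition diffop_vec :: "(nat \<Rightarrow> complex poly) \<Rightarrow> (nat \<Rightarrow> real \<Rightarrow> complex) \<Rightarrow> real \<Rightarrow> complex" where
  "diffop_vec P Xs = (\<lambda>r. \<Sum>m<3. diffop (P m) (Xs m) r)"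

lemma smooth_fun_diffop_vec: "\<forall>m<3. smooth_fun (Xs m) \<Longrightarrow> smooth_fun (diffop_vec P Xs)"
  unfolding diffop_vec_def by (rule smooth_fun_sum) (auto intro: smooth_fun_diffop)

lemma diffop_diffop_vec:
  assumes "\<forall>m<3. smooth_fun (Xs m)"
  shows "diffop p (diffop_vec P Xs) = diffop_vec (\<lambda>m. p * P m) Xs"
proof
  fix r
  have "nth_vderiv n (diffop_vec P Xs) = (\<lambda>r. \<Sum>m<3. nth_vderiv n (diffop (P m) (Xs m)) r)" for n
    unfolding diffop_vec_def by (rule nth_vderiv_sum) (use assms smooth_fun_diffop in auto)
  then have "diffop p (diffop_vec P Xs) r = (\<Sum>m<3. diffop p (diffop (P m) (Xs m)) r)"
    by (simp add: diffop_def[of p] sum_distrib_left sum.swap[of _ "{..<3}"])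
  also have "\<dots> = diffop_vec (\<lambda>m. p * P m) Xs r"
    unfolding diffop_vec_def using assms by (auto simp: diffop_mult)
  finally show "diffop p (diffop_vec P Xs) r = diffop_vec (\<lambda>m. p * P m) Xs r" .
qed

lemma diffop_vec_add: "diffop_vec (\<lambda>m. P m + Q m) Xs r = diffop_vec P Xs r + diffop_vec Q Xs r"
  by (simp add: diffop_vec_def diffop_add sum.distrib)

lemma diffop_vec_diff: "diffop_vec (\<lambda>m. P m - Q m) Xs r = diffop_vec P Xs r - diffop_vec Q Xs r"
  by (simp add: diffop_vec_def diffop_diff sum_subtractf)

lemma diffop_vec_smult: "diffop_vec (\<lambda>m. smult c (P m)) Xs r = c * diffop_vec P Xs r"
  by (simp add: diffop_vec_def diffop_smult sum_distrib_left)

lemma diffop_vec_sum: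
  "finite S \<Longrightarrow> diffop_vec (\<lambda>m. \<Sum>x\<in>S. P x m) Xs r = (\<Sum>x\<in>S. diffop_vec (P x) Xs r)"
  by (simp add: diffop_vec_def diffop_sum sum.swap[of _ S])

lemma diffop_vec_delta: "l < 3 \<Longrightarrow> diffop_vec (\<lambda>m. if m = l then p else 0) Xs r = diffop p (Xs l) r"
  by (simp add: diffop_vec_def if_distrib[of "\<lambda>q. diffop q _ r"] cong: if_cong)

lemma diffop_vec_cong: "(\<And>m. m < 3 \<Longrightarrow> P m = Q m) \<Longrightarrow> diffop_vec P Xs = diffop_vec Q Xs"
  by (simp add: diffop_vec_def)

lemma Pvec_eq_diffop_vec:
  assumes G_sym: "\<forall>i<3. \<forall>j<3. G i j = G j i" and sm: "\<forall>m<3. smooth_fun (Xs m)" and i: "i < 3"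
  shows "2 * Pvec G \<xi> Xs i r = diffop_vec (vec_symb G \<xi> i) Xs r"
proof -
  let ?L = "lap_symb G \<xi>" and ?s = "partial_symb \<xi>"
  define R where "R j m = (if m = j then ?s i else 0) + (if m = i then ?s j else 0)" for j m
  have symmetrized_grad: "(\<lambda>s. (dop \<xi> i (Xs j) s + dop \<xi> j (Xs i) s) / 2) = diffop_vec (\<lambda>m. smult (1/2) (R j m)) Xs"
    if "j < 3" for j
    using that i sm by (auto simp: fun_eq_iff diffop_vec_smult diffop_vec_add diffop_vec_delta R_def dop_eq_diffop)
  have div: "(\<lambda>s. \<Sum>k<3. \<Sum>l<3. complex_of_real (G k l) * dop \<xi> k (Xs l) s) = diffop_vec (raised_symb G \<xi>) Xs"
  proof
    fix s
    have "(\<Sum>k<3. \<Sum>l<3. complex_of_real (G k l) * dop \<xi> k (Xs l) s)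
        = (\<Sum>l<3. \<Sum>k<3. complex_of_real (G l k) * diffop (partial_symb \<xi> k) (Xs l) s)"
      using G_sym sm by (subst sum.swap) (auto simp: dop_eq_diffop intro!: sum.cong)
    then show "(\<Sum>k<3. \<Sum>l<3. complex_of_real (G k l) * dop \<xi> k (Xs l) s) = diffop_vec (raised_symb G \<xi>) Xs s"
      by (simp add: diffop_vec_def raised_symb_def diffop_sum diffop_smult)
  qed
  have "Pvec G \<xi> Xs i r = (\<Sum>j<3. \<Sum>l<3. complex_of_real (G j l) *
       (1/2) * diffop_vec (\<lambda>m. ?s l * (?L * R j m)) Xs r) + diffop_vec (\<lambda>m. ?s i * (?L * raised_symb G \<xi> m)) Xs r"
    unfolding Pvec_def div using sm i
    by (simp add: symmetrized_grad) (simp add: lap_eq_diffop dop_eq_diffop smooth_fun_diffop_vec diffop_diffop_vec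
        diffop_vec_smult)
  also have "\<dots> = (1/2) * diffop_vec (\<lambda>m. (\<Sum>j<3. \<Sum>l<3. [:complex_of_real (G j l):] * (?s l * (?L * R j m)))
        + 2 * (?s i * (?L * raised_symb G \<xi> m))) Xs r"
    by (simp add: diffop_vec_add diffop_vec_sum diffop_vec_smult numeral_mult_conv_smult
        sum_distrib_left mult_ac)
  also have "\<dots> = (1/2) * diffop_vec (vec_symb G \<xi> i) Xs r"
    unfolding R_def by (subst diffop_vec_cong[OF vec_symb_expand]) simp_all
  finally show ?thesis by (simp add: mult.commute)
qed

lemma Pvec_eq_divergence:
  assumes "\<forall>i<3. \<forall>j<3. G i j = G j i" "\<forall>m<3. smooth_fun (Xs m)" "i < 3"
  shows "2 * Pvec G \<xi> Xs i r = 3 * diffop (partial_symb \<xi> i * lap_symb G \<xi>) (diffop_vec (raised_symb G \<xi>) Xs) r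
     + diffop (lap_symb G \<xi> ^ 2) (Xs i) r"
proof -
  have "vec_symb G \<xi> i = (\<lambda>m. smult 3 (partial_symb \<xi> i * lap_symb G \<xi> * raised_symb G \<xi> m)
      + (if m = i then lap_symb G \<xi> ^ 2 else 0))"
    by (simp add: fun_eq_iff vec_symb_def numeral_mult_conv_smult)
  then show ?thesis
    using assms by (simp add: Pvec_eq_diffop_vec diffop_vec_add diffop_vec_smult diffop_vec_delta
        diffop_diffop_vec)
qed

lemma lap_symb_cube_eq:
  assumes "m < 3"
  shows "(if m = i then 4 * lap_symb G \<xi> ^ 3 else 0) = 4 * lap_symb G \<xi> * vec_symb G \<xi> i m
     - 3 * partial_symb \<xi> i * (\<Sum>j<3. raised_symb G \<xi> j * vec_symb G \<xi> j m)"
  unfolding vec_symb_contraction[OF assms] by (simp add: vec_symb_def power3_eq_cube power2_eq_square algebra_simps)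

lemma lap_cube_vector_solution_eq_0:
  assumes G_sym: "\<forall>i<3. \<forall>j<3. G i j = G j i" and sm: "\<forall>m<3. smooth_fun (Xs m)"
    and eq_vec: "\<forall>i<3. \<forall>r\<ge>0. Pvec G \<xi> Xs i r = 0" and i: "i < 3" and r: "r > 0"
  shows "diffop (lap_symb G \<xi> ^ 3) (Xs i) r = 0"
proof -
  let ?L = "lap_symb G \<xi>" and ?P = "\<lambda>j. diffop_vec (vec_symb G \<xi> j) Xs"
  have P0: "diffop q (?P j) r = 0" if "j < 3" for q j
  proof (rule diffop_vanish_pos[OF _ r])
    show "\<forall>s>0. ?P j s = 0"
      using Pvec_eq_diffop_vec[OF G_sym sm that, symmetric] eq_vec that by simp
  qed
  have "4 * diffop (?L ^ 3) (Xs i) r = diffop_vec (\<lambda>m. if m = i then 4 * ?L ^ 3 else 0) Xs r"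
    using i by (simp add: diffop_vec_delta numeral_mult_conv_smult diffop_smult)
  also have "\<dots> = diffop_vec (\<lambda>m. (4 * ?L) * vec_symb G \<xi> i m
     - (\<Sum>j<3. (3 * partial_symb \<xi> i * raised_symb G \<xi> j) * vec_symb G \<xi> j m)) Xs r"
    by (subst diffop_vec_cong[OF lap_symb_cube_eq]) (simp_all add: sum_distrib_left mult.assoc)
  also have "\<dots> = diffop (4 * ?L) (?P i) r - (\<Sum>j<3. diffop (3 * partial_symb \<xi> i * raised_symb G \<xi> j) (?P j) r)"
    using sm by (simp add: diffop_vec_diff diffop_vec_sum diffop_diffop_vec)
  also have "\<dots> = 0"
    using i P0 by simp
  finally show ?thesis by simp
qed

section \<open>Exponential polynomials\<close>

lemma pderiv_add_smult_eq_0_imp_eq_0: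
  fixes R :: "complex poly"
  assumes "d \<noteq> 0" and "pderiv R + smult d R = 0"
  shows "R = 0"
proof -
  have "coeff (pderiv R + smult d R) (degree R) = 0"
    using assms(2) by simp
  then have "d * lead_coeff R = 0"
    by (simp add: coeff_pderiv coeff_eq_0)
  then show ?thesis
    using assms(1) by simp
qed

lemma ex_pderiv_add_smult_eq:
  fixes A :: "complex poly"
  assumes d: "d \<noteq> 0"
  shows "\<exists>Q. pderiv Q + smult d Q = A"
proof (induction "degree A" arbitrary: A rule: less_induct)
  case less
  show ?case
  proof (cases "degree A = 0")
    case True
    then have "pderiv A = 0"
      by (simp add: pderiv_eq_0_iff)
    then show ?thesis
      using d by (intro exI[of _ "smult (1/d) A"]) (simp add: pderiv_smult)
  next
    case False
    then have "degree (smult (-1/d) (pderiv A)) < degree A"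
      by (simp add: degree_pderiv)
    then obtain Q where Q: "pderiv Q + smult d Q = smult (-1/d) (pderiv A)"
      using less by blast
    have "pderiv (smult (1/d) A + Q) + smult d (smult (1/d) A + Q)
        = smult (1/d) (pderiv A) + (pderiv Q + smult d Q) + A"
      using d by (simp add: pderiv_add pderiv_smult smult_add_right algebra_simps)
    also have "\<dots> = A"
      using Q by (simp add: smult_add_left[symmetric])
    finally show ?thesis ..
  qed
qed

lemma ex_pderiv_add_smult_eq_pderiv_funpow:
  fixes A :: "complex poly"
  assumes d: "d \<noteq> 0" and A: "(pderiv ^^ n) A = 0"
  shows "\<exists>Q. pderiv Q + smult d Q = A \<and> (pderiv ^^ n) Q = 0"
proof -
  obtain Q where Q: "pderiv Q + smult d Q = A"
    using ex_pderiv_add_smult_eq[OF d] by blast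
  have "(pderiv ^^ n) (pderiv Q + smult d Q) = pderiv ((pderiv ^^ n) Q) + smult d ((pderiv ^^ n) Q)"
    by (simp add: higher_pderiv_add higher_pderiv_smult funpow_swap1)
  then have "pderiv ((pderiv ^^ n) Q) + smult d ((pderiv ^^ n) Q) = 0"
    using Q A by simp
  then show ?thesis
    using Q pderiv_add_smult_eq_0_imp_eq_0[OF d] by blast
qed

lemma ex_antiderivative: "\<exists>Q. pderiv Q = (A :: complex poly)"
proof -
  define Q where "Q = Poly (0 # map (\<lambda>k. coeff A k / of_nat (Suc k)) [0..<Suc (degree A)])"
  have "coeff (pderiv Q) k = coeff A k" for k
  proof (cases "k \<le> degree A")
    case True
    have "1 + complex_of_nat k \<noteq> 0"
      using of_nat_neq_0[of k, where 'a = complex] by (simp add: add.commute)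
    with True show ?thesis
      by (simp add: Q_def coeff_pderiv nth_default_def del: upt_Suc)
  qed (simp add: Q_def coeff_pderiv nth_default_def coeff_eq_0 del: upt_Suc)
  then show ?thesis
    by (auto simp: poly_eq_iff)
qed

lemma coeff_eq_0_if_higher_pderiv_eq_0:
  fixes B :: "complex poly"
  assumes "(pderiv ^^ n) B = 0" "n \<le> k"
  shows "coeff B k = 0"
proof -
  have "pochhammer (of_nat (Suc (k - n))) n * coeff B k = (0 :: complex)"
    using coeff_higher_pderiv[of n B "k - n"] assms by simp
  moreover have "pochhammer (of_nat (Suc (k - n))) n \<noteq> (0 :: complex)"
    by (auto simp: pochhammer_eq_0_iff eq_neg_iff_add_eq_0 simp flip: of_nat_Suc of_nat_add)
  ultimately show ?thesis
    by simp
qed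

definition exp_poly :: "real \<Rightarrow> complex poly \<Rightarrow> complex poly \<Rightarrow> real \<Rightarrow> complex" where
  "exp_poly \<mu> A B r = poly A (complex_of_real r) * exp (complex_of_real (\<mu> * r))
     + poly B (complex_of_real r) * exp (- complex_of_real (\<mu> * r))"

lemma has_vector_derivative_exp_poly:
  "(exp_poly \<mu> A B has_vector_derivative
     exp_poly \<mu> (pderiv A + smult (complex_of_real \<mu>) A) (pderiv B - smult (complex_of_real \<mu>) B) r) (at r)"
proof -
  define F where "F z = poly A z * exp (complex_of_real \<mu> * z) + poly B z * exp (- (complex_of_real \<mu> * z))" for z
  have "(F has_field_derivative
      exp_poly \<mu> (pderiv A + smult (complex_of_real \<mu>) A) (pderiv B - smult (complex_of_real \<mu>) B) r)
      (at (complex_of_real r))"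
    unfolding F_def exp_poly_def by (auto intro!: derivative_eq_intros poly_DERIV simp: algebra_simps)
  moreover have "exp_poly \<mu> A B = (\<lambda>x. F (complex_of_real x))"
    by (simp add: fun_eq_iff F_def exp_poly_def)
  ultimately show ?thesis
    by (simp add: has_vector_derivative_real_field)
qed

lemma vector_derivative_exp_poly:
  "vector_derivative (exp_poly \<mu> A B) (at r)
     = exp_poly \<mu> (pderiv A + smult (complex_of_real \<mu>) A) (pderiv B - smult (complex_of_real \<mu>) B) r"
  by (rule vector_derivative_at[OF has_vector_derivative_exp_poly])

lemma smooth_fun_exp_poly: "smooth_fun (exp_poly \<mu> A B)"
proof -
  have "\<exists>A' B'. nth_vderiv k (exp_poly \<mu> A B) = exp_poly \<mu> A' B'" for k
  proof (induction k)
    case (Suc k)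
    then obtain A' B' where "nth_vderiv k (exp_poly \<mu> A B) = exp_poly \<mu> A' B'"
      by blast
    then have "nth_vderiv (Suc k) (exp_poly \<mu> A B)
        = exp_poly \<mu> (pderiv A' + smult (complex_of_real \<mu>) A') (pderiv B' - smult (complex_of_real \<mu>) B')"
      by (simp add: vector_derivative_exp_poly)
    then show ?case
      by blast
  qed auto
  then show ?thesis
    unfolding smooth_fun_def by (metis has_vector_derivative_exp_poly differentiableI_vector)
qed

lemma exp_poly_0 [simp]: "exp_poly \<mu> 0 0 r = 0"
  by (simp add: exp_poly_def)

lemma first_order_ode_homogeneous:
  assumes "\<forall>r>0. (g has_vector_derivative c * g r) (at r)"
  shows "\<exists>K. \<forall>r>0. g r = K * exp (c * complex_of_real r)"
proof -
  define h where "h r = g r * exp (- c * complex_of_real r)" for r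
  have "(h has_vector_derivative 0) (at r within {0<..})" if "r \<in> {0<..}" for r
  proof -
    have "((\<lambda>r. exp (- c * complex_of_real r)) has_vector_derivative - c * exp (- c * complex_of_real r)) (at r)"
      by (rule has_vector_derivative_real_field) (auto intro!: derivative_eq_intros)
    moreover have "(g has_vector_derivative c * g r) (at r)"
      using assms that by simp
    ultimately have "(h has_vector_derivative g r * (- c * exp (- c * complex_of_real r))
        + c * g r * exp (- c * complex_of_real r)) (at r)"
      unfolding h_def by (rule has_vector_derivative_mult[rotated])
    then show ?thesis
      by (auto simp: algebra_simps intro: has_vector_derivative_at_within)
  qed
  then obtain K where "\<And>r. r \<in> {0<..} \<Longrightarrow> h r = K"
    using has_vector_derivative_zero_constant[of "{0<..}" h] by (metis convex_real_interval(3))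
  moreover have "g r = h r * exp (c * complex_of_real r)" for r
    by (simp add: h_def mult.assoc flip: exp_add)
  ultimately show ?thesis
    by auto
qed

lemma first_order_ode_exp_poly:
  assumes g: "\<forall>r>0. (g has_vector_derivative c * g r + exp_poly \<mu> A B r) (at r)"
    and Q: "pderiv Q + smult (complex_of_real \<mu> - c) Q = A"
    and R: "pderiv R + smult (- complex_of_real \<mu> - c) R = B"
  shows "\<exists>K. \<forall>r>0. g r = exp_poly \<mu> Q R r + K * exp (c * complex_of_real r)"
proof -
  have "((\<lambda>r. g r - exp_poly \<mu> Q R r) has_vector_derivative c * (g r - exp_poly \<mu> Q R r)) (at r)"
    if "r > 0" for r
  proof -
    have "((\<lambda>r. g r - exp_poly \<mu> Q R r) has_vector_derivative c * g r + exp_poly \<mu> A B r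
        - exp_poly \<mu> (pderiv Q + smult (complex_of_real \<mu>) Q) (pderiv R - smult (complex_of_real \<mu>) R) r) (at r)"
      using g that by (intro has_vector_derivative_diff has_vector_derivative_exp_poly) auto
    moreover have "c * g r + exp_poly \<mu> A B r
        - exp_poly \<mu> (pderiv Q + smult (complex_of_real \<mu>) Q) (pderiv R - smult (complex_of_real \<mu>) R) r
        = c * (g r - exp_poly \<mu> Q R r)"
      unfolding Q[symmetric] R[symmetric] by (simp add: exp_poly_def algebra_simps)
    ultimately show ?thesis
      by simp
  qed
  then obtain K where "\<forall>r>0. g r - exp_poly \<mu> Q R r = K * exp (c * complex_of_real r)"
    using first_order_ode_homogeneous[of "\<lambda>r. g r - exp_poly \<mu> Q R r"] by blast
  then show ?thesis
    by (metis diff_eq_eq add.commute)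
qed

lemma diffop_linear_factor:
  "smooth_fun g \<Longrightarrow> diffop [:c, 1:] g r = vector_derivative g (at r) + c * g r"
  using diffop_pCons[of g c "[:1:]" r] by (simp add: diffop_const diffop_const_1)

lemma exp_poly_of_minus_factor:
  assumes "\<mu> \<noteq> 0" and sm: "smooth_fun g"
    and eq: "\<forall>r>0. diffop [:- complex_of_real \<mu>, 1:] g r = exp_poly \<mu> A B r"
    and B: "(pderiv ^^ n) B = 0"
  shows "\<exists>A' B'. (pderiv ^^ n) B' = 0 \<and> (\<forall>r>0. g r = exp_poly \<mu> A' B' r)"
proof -
  obtain Q where Q: "pderiv Q + smult (complex_of_real \<mu> - complex_of_real \<mu>) Q = A"
    using ex_antiderivative by force
  have "- complex_of_real \<mu> - complex_of_real \<mu> \<noteq> 0"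
    using assms(1) by simp
  then obtain R where R: "pderiv R + smult (- complex_of_real \<mu> - complex_of_real \<mu>) R = B"
    and R_deg: "(pderiv ^^ n) R = 0"
    using ex_pderiv_add_smult_eq_pderiv_funpow B by blast
  have "(g has_vector_derivative complex_of_real \<mu> * g r + exp_poly \<mu> A B r) (at r)" if "r > 0" for r
    using smooth_fun_has_vector_derivative[OF sm, of r] eq that
    by (simp add: diffop_linear_factor[OF sm] diff_eq_eq add.commute)
  then have "\<forall>r>0. (g has_vector_derivative complex_of_real \<mu> * g r + exp_poly \<mu> A B r) (at r)"
    by blast
  from first_order_ode_exp_poly[OF this Q R]
  obtain K where "\<forall>r>0. g r = exp_poly \<mu> Q R r + K * exp (complex_of_real \<mu> * complex_of_real r)"
    by blast
  then have "\<forall>r>0. g r = exp_poly \<mu> (Q + [:K:]) R r"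
    by (simp add: exp_poly_def algebra_simps)
  with R_deg show ?thesis
    by blast
qed

lemma exp_poly_of_plus_factor:
  assumes "\<mu> \<noteq> 0" and sm: "smooth_fun g"
    and eq: "\<forall>r>0. diffop [:complex_of_real \<mu>, 1:] g r = exp_poly \<mu> A B r"
    and B: "(pderiv ^^ n) B = 0"
  shows "\<exists>A' B'. (pderiv ^^ Suc n) B' = 0 \<and> (\<forall>r>0. g r = exp_poly \<mu> A' B' r)"
proof -
  have "complex_of_real \<mu> - - complex_of_real \<mu> \<noteq> 0"
    using assms(1) by simp
  then obtain Q where Q: "pderiv Q + smult (complex_of_real \<mu> - - complex_of_real \<mu>) Q = A"
    using ex_pderiv_add_smult_eq by blast
  obtain R where R: "pderiv R + smult (- complex_of_real \<mu> - - complex_of_real \<mu>) R = B"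
    using ex_antiderivative by force
  have "(g has_vector_derivative - complex_of_real \<mu> * g r + exp_poly \<mu> A B r) (at r)" if "r > 0" for r
    using smooth_fun_has_vector_derivative[OF sm, of r] eq that
    by (simp add: diffop_linear_factor[OF sm] eq_diff_eq[symmetric])
  then have "\<forall>r>0. (g has_vector_derivative - complex_of_real \<mu> * g r + exp_poly \<mu> A B r) (at r)"
    by blast
  from first_order_ode_exp_poly[OF this Q R]
  obtain K where "\<forall>r>0. g r = exp_poly \<mu> Q R r + K * exp (- complex_of_real \<mu> * complex_of_real r)"
    by blast
  then have "\<forall>r>0. g r = exp_poly \<mu> Q (R + [:K:]) r"
    by (simp add: exp_poly_def algebra_simps)
  moreover have "(pderiv ^^ Suc n) (R + [:K:]) = 0"
    using R B by (simp add: funpow_Suc_right pderiv_add del: funpow.simps)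
  ultimately show ?thesis
    by blast
qed

lemma exp_poly_solution:
  assumes "\<mu> \<noteq> 0" "smooth_fun g"
    and "\<forall>r>0. diffop ([:- complex_of_real \<mu>, 1:] ^ n * [:complex_of_real \<mu>, 1:] ^ m) g r = 0"
  shows "\<exists>A B. (pderiv ^^ m) B = 0 \<and> (\<forall>r>0. g r = exp_poly \<mu> A B r)"
  using assms(2,3)
proof (induction n arbitrary: g)
  case 0
  then show ?case
  proof (induction m arbitrary: g)
    case 0
    then show ?case
      by (intro exI[of _ 0]) (simp add: diffop_const_1 one_pCons)
  next
    case (Suc m)
    have "diffop ([:complex_of_real \<mu>, 1:] ^ Suc m) g
        = diffop ([:complex_of_real \<mu>, 1:] ^ m) (diffop [:complex_of_real \<mu>, 1:] g)"
      unfolding diffop_mult[OF Suc.prems(1), symmetric] by (simp only: power_Suc mult.commute)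
    then have "\<forall>r>0. diffop ([:complex_of_real \<mu>, 1:] ^ m) (diffop [:complex_of_real \<mu>, 1:] g) r = 0"
      using Suc.prems(2) by simp
    then obtain A B where "(pderiv ^^ m) B = 0" "\<forall>r>0. diffop [:complex_of_real \<mu>, 1:] g r = exp_poly \<mu> A B r"
      using Suc.IH Suc.prems(1) smooth_fun_diffop by (metis power_0 mult_1)
    then show ?case
      using exp_poly_of_plus_factor[OF assms(1) Suc.prems(1)] by blast
  qed
next
  case (Suc n)
  have "diffop ([:- complex_of_real \<mu>, 1:] ^ Suc n * [:complex_of_real \<mu>, 1:] ^ m) g
      = diffop ([:- complex_of_real \<mu>, 1:] ^ n * [:complex_of_real \<mu>, 1:] ^ m) (diffop [:- complex_of_real \<mu>, 1:] g)"
    unfolding diffop_mult[OF Suc.prems(1), symmetric] by (simp only: power_Suc mult_ac)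
  then have "\<forall>r>0. diffop ([:- complex_of_real \<mu>, 1:] ^ n * [:complex_of_real \<mu>, 1:] ^ m)
      (diffop [:- complex_of_real \<mu>, 1:] g) r = 0"
    using Suc.prems(2) by simp
  then obtain A B where "(pderiv ^^ m) B = 0" "\<forall>r>0. diffop [:- complex_of_real \<mu>, 1:] g r = exp_poly \<mu> A B r"
    using Suc.IH Suc.prems(1) smooth_fun_diffop by blast
  then show ?case
    using exp_poly_of_minus_factor[OF assms(1) Suc.prems(1)] by blast
qed

lemma tendsto_poly_exp_neg:
  assumes "\<mu> > 0"
  shows "((\<lambda>r. poly B (complex_of_real r) * exp (- complex_of_real (\<mu> * r))) \<longlongrightarrow> 0) at_top"
proof -
  have "((\<lambda>r. complex_of_real (r ^ k * exp (- \<mu> * r))) \<longlongrightarrow> 0) at_top" for k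
    using assms by (intro tendsto_of_real_iff[where c = 0, simplified, THEN iffD2]) real_asymp
  then have "((\<lambda>r. \<Sum>k\<le>degree B. coeff B k * complex_of_real (r ^ k * exp (- \<mu> * r))) \<longlongrightarrow> 0) at_top"
    by (intro tendsto_null_sum tendsto_mult_right_zero)
  then show ?thesis
    by (simp add: poly_altdef sum_distrib_right mult.assoc flip: exp_of_real)
qed

lemma exp_poly_tendsto_0_imp_growing_eq_0:
  assumes "\<mu> > 0" and "(f \<longlongrightarrow> 0) at_top" and "\<forall>r>0. f r = exp_poly \<mu> A B r"
  shows "A = 0"
proof -
  have "((\<lambda>r. f r - poly B (complex_of_real r) * exp (- complex_of_real (\<mu> * r))) \<longlongrightarrow> 0) at_top"
    using tendsto_diff[OF assms(2) tendsto_poly_exp_neg[OF assms(1)]] by simp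
  moreover have "\<forall>\<^sub>F r in at_top. f r - poly B (complex_of_real r) * exp (- complex_of_real (\<mu> * r))
      = poly A (complex_of_real r) * exp (complex_of_real (\<mu> * r))"
    using eventually_gt_at_top[of 0] by eventually_elim (simp add: assms(3) exp_poly_def)
  ultimately have "((\<lambda>r. poly A (complex_of_real r) * exp (complex_of_real (\<mu> * r))) \<longlongrightarrow> 0) at_top"
    by (rule Lim_transform_eventually)
  from tendsto_mult[OF this tendsto_poly_exp_neg[OF assms(1), of 1]]
  have "((\<lambda>r. poly A (complex_of_real r)) \<longlongrightarrow> 0) at_top"
    by (simp add: mult.assoc flip: exp_add)
  then show ?thesis
  proof (rule contrapos_pp)
    assume "A \<noteq> 0"
    show "\<not> ((\<lambda>r. poly A (complex_of_real r)) \<longlongrightarrow> 0) at_top"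
    proof (cases "degree A = 0")
      case True
      with \<open>A \<noteq> 0\<close> show ?thesis
        by (auto elim: degree_eq_zeroE simp: tendsto_const_iff)
    next
      case False
      have "filterlim (\<lambda>r. poly A (complex_of_real r)) at_infinity at_top"
        using filterlim_compose[OF filterlim_poly_at_infinity[of A] filterlim_of_real_at_infinity] False
        by simp
      then show ?thesis
        using not_tendsto_and_filterlim_at_infinity[OF trivial_limit_at_top_linorder] by blast
    qed
  qed
qed

lemma decaying_solution_exp_poly:
  assumes "\<mu> > 0" "c \<noteq> 0" "smooth_fun f" "(f \<longlongrightarrow> 0) at_top"
    and "\<forall>r>0. diffop (smult c ([:- complex_of_real \<mu>, 1:] * [:complex_of_real \<mu>, 1:]) ^ n) f r = 0"
  shows "\<exists>B. (pderiv ^^ n) B = 0 \<and> (\<forall>r>0. f r = exp_poly \<mu> 0 B r)"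
proof -
  have "smult c ([:- complex_of_real \<mu>, 1:] * [:complex_of_real \<mu>, 1:]) ^ n
      = smult (c ^ n) ([:- complex_of_real \<mu>, 1:] ^ n * [:complex_of_real \<mu>, 1:] ^ n)"
    by (simp only: smult_power power_mult_distrib)
  then have "\<forall>r>0. diffop ([:- complex_of_real \<mu>, 1:] ^ n * [:complex_of_real \<mu>, 1:] ^ n) f r = 0"
    using assms(2,5) by (simp add: diffop_smult)
  then obtain A B where "(pderiv ^^ n) B = 0" "\<forall>r>0. f r = exp_poly \<mu> A B r"
    using exp_poly_solution[of \<mu> f n n] assms(1,3) by auto
  moreover have "A = 0"
    using exp_poly_tendsto_0_imp_growing_eq_0 assms(1,4) calculation(2) by blast
  ultimately show ?thesis
    by blast
qed

section \<open>Decaying exponential polynomials\<close>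

definition twisted_pderiv :: "real \<Rightarrow> complex poly \<Rightarrow> complex poly" where
  "twisted_pderiv \<mu> B = pderiv B - smult (complex_of_real \<mu>) B"

definition twisted_op :: "real \<Rightarrow> complex poly \<Rightarrow> complex poly \<Rightarrow> complex poly" where
  "twisted_op \<mu> p B = (\<Sum>n\<le>degree p. smult (coeff p n) ((twisted_pderiv \<mu> ^^ n) B))"

lemma exp_poly_0_add: "exp_poly \<mu> 0 (B + C) r = exp_poly \<mu> 0 B r + exp_poly \<mu> 0 C r"
  by (simp add: exp_poly_def algebra_simps)

lemma exp_poly_0_diff: "exp_poly \<mu> 0 (B - C) r = exp_poly \<mu> 0 B r - exp_poly \<mu> 0 C r"
  by (simp add: exp_poly_def algebra_simps)

lemma exp_poly_0_smult: "exp_poly \<mu> 0 (smult c B) r = c * exp_poly \<mu> 0 B r"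
  by (simp add: exp_poly_def)

lemma exp_poly_0_sum: "exp_poly \<mu> 0 (\<Sum>x\<in>S. B x) r = (\<Sum>x\<in>S. exp_poly \<mu> 0 (B x) r)"
  by (induction S rule: infinite_finite_induct) (auto simp: exp_poly_0_add)

lemma exp_poly_0_at_0: "exp_poly \<mu> 0 B 0 = poly B 0"
  by (simp add: exp_poly_def)

lemma diffop_exp_poly_0: "diffop p (exp_poly \<mu> 0 B) = exp_poly \<mu> 0 (twisted_op \<mu> p B)"
proof -
  have "nth_vderiv n (exp_poly \<mu> 0 B) = exp_poly \<mu> 0 ((twisted_pderiv \<mu> ^^ n) B)" for n
    by (induction n) (simp_all add: vector_derivative_exp_poly twisted_pderiv_def)
  then show ?thesis
    by (simp add: fun_eq_iff diffop_def twisted_op_def exp_poly_0_sum exp_poly_0_smult)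
qed

lemma exp_poly_0_eq_0_imp:
  assumes "\<forall>r>0. exp_poly \<mu> 0 B r = 0"
  shows "B = 0"
proof (rule ccontr)
  assume "B \<noteq> 0"
  have "complex_of_real ` {0<..} \<subseteq> {x. poly B x = 0}"
    using assms by (auto simp: exp_poly_def)
  moreover have "infinite (complex_of_real ` {0<..})"
    by (subst finite_image_iff) (auto simp: inj_on_def infinite_Ioi)
  ultimately show False
    using poly_roots_finite[OF \<open>B \<noteq> 0\<close>] finite_subset by blast
qed

lemma exp_poly_0_inject:
  assumes "\<forall>r>0. exp_poly \<mu> 0 B r = exp_poly \<mu> 0 C r"
  shows "B = C"
  using exp_poly_0_eq_0_imp[of \<mu> "B - C"] assms by (simp add: exp_poly_0_diff)

lemma twisted_op_mult: "twisted_op \<mu> (p * q) B = twisted_op \<mu> p (twisted_op \<mu> q B)"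
  using diffop_mult[OF smooth_fun_exp_poly, of p q \<mu> 0 B]
  by (intro exp_poly_0_inject[of \<mu>]) (simp add: diffop_exp_poly_0)

lemma twisted_op_0_right [simp]: "twisted_op \<mu> p 0 = 0"
proof -
  have "(twisted_pderiv \<mu> ^^ n) 0 = 0" for n
    by (induction n) (simp_all add: twisted_pderiv_def)
  then show ?thesis
    by (simp add: twisted_op_def)
qed

lemma twisted_op_smult: "twisted_op \<mu> (smult c p) B = smult c (twisted_op \<mu> p B)"
  using diffop_smult[of c p "exp_poly \<mu> 0 B"]
  by (intro exp_poly_0_inject[of \<mu>]) (simp add: diffop_exp_poly_0 exp_poly_0_smult)

lemma twisted_op_const: "twisted_op \<mu> [:c:] B = smult c B"
  by (simp add: twisted_op_def)

lemma twisted_op_linear_factor: "twisted_op \<mu> [:c, 1:] B = twisted_pderiv \<mu> B + smult c B"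
  by (simp add: twisted_op_def)

lemma twisted_op_partial_symb:
  "twisted_op \<mu> (partial_symb \<xi> l) B = (if l = 0 then twisted_pderiv \<mu> B else smult (\<i> * complex_of_real (\<xi> l)) B)"
  using twisted_op_linear_factor[of \<mu> 0 B] by (simp add: partial_symb_def twisted_op_const)

lemma twisted_op_lap_factorized:
  "twisted_op \<mu> (smult a ([:- complex_of_real \<mu>, 1:] * [:complex_of_real \<mu>, 1:])) B
     = smult a (pderiv (pderiv B) - smult (2 * complex_of_real \<mu>) (pderiv B))"
  unfolding twisted_op_smult twisted_op_mult twisted_op_linear_factor twisted_pderiv_def
  by (simp add: pderiv_add pderiv_diff pderiv_smult algebra_simps smult_add_left[symmetric])

lemma diffop_eq_exp_poly_0:
  assumes "smooth_fun f" "\<forall>s>0. f s = exp_poly \<mu> 0 B s" "r \<ge> 0"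
  shows "diffop p f r = exp_poly \<mu> 0 (twisted_op \<mu> p B) r"
  using diffop_cong_nonneg[OF assms(1) smooth_fun_exp_poly assms(2,3)] by (simp add: diffop_exp_poly_0)

lemma decaying_solution_vanishing_at_0:
  assumes "\<mu> > 0" "a \<noteq> 0" "smooth_fun f" "(f \<longlongrightarrow> 0) at_top"
    and "\<forall>r>0. diffop (smult a ([:- complex_of_real \<mu>, 1:] * [:complex_of_real \<mu>, 1:]) ^ 3) f r = 0"
    and "f 0 = 0" "vector_derivative f (at 0) = 0"
  shows "\<exists>c. \<forall>r>0. f r = exp_poly \<mu> 0 [:0, 0, c:] r"
proof -
  obtain B where B: "(pderiv ^^ 3) B = 0" "\<forall>r>0. f r = exp_poly \<mu> 0 B r"
    using decaying_solution_exp_poly[OF assms(1-5)] by blast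
  have B_eq: "B = [:coeff B 0, coeff B 1, coeff B 2:]"
    using coeff_eq_0_if_higher_pderiv_eq_0[OF B(1)]
    by (intro poly_eqI) (auto simp: coeff_pCons numeral_3_eq_3 numeral_2_eq_2 split: nat.split)
  have "f 0 = poly B 0"
    using diffop_eq_exp_poly_0[OF assms(3) B(2), of 0 "[:1:]"]
    by (simp add: diffop_const_1 twisted_op_const exp_poly_0_at_0)
  moreover have "vector_derivative f (at 0) = poly (twisted_pderiv \<mu> B) 0"
    using diffop_eq_exp_poly_0[OF assms(3) B(2), of 0 "[:0, 1:]"] diffop_linear_factor[OF assms(3), of 0 0]
    by (simp add: twisted_op_linear_factor exp_poly_0_at_0)
  ultimately have "coeff B 0 = 0" "coeff B 1 = 0"
    using assms(6,7) by (simp_all add: poly_0_coeff_0 twisted_pderiv_def coeff_pderiv)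
  with B_eq have "B = [:0, 0, coeff B 2:]"
    by simp
  with B(2) show ?thesis
    by (metis (no_types))
qed

section \<open>Normal coordinates\<close>

lemma inv_metric_symmetric: "inv_metric G \<Longrightarrow> \<forall>i<3. \<forall>j<3. G i j = G j i"
  by (simp add: inv_metric_def)

lemma inv_metric_quadratic_pos:
  "inv_metric G \<Longrightarrow> \<exists>i<3. v i \<noteq> 0 \<Longrightarrow> (\<Sum>i<3. \<Sum>j<3. G i j * v i * v j) > 0"
  by (simp add: inv_metric_def)

lemma lap_symb_normal:
  assumes "G 0 1 = 0" "G 0 2 = 0" "G 1 0 = 0" "G 2 0 = 0"
  shows "lap_symb G \<xi> = [:- complex_of_real (\<Sum>i<3. \<Sum>j<3.
      G i j * (if i = 0 then 0 else \<xi> i) * (if j = 0 then 0 else \<xi> j)), 0, complex_of_real (G 0 0):]"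
  using assms by (simp add: lap_symb_def partial_symb_def eval_nat_numeral algebra_simps)

lemma raised_symb_normal:
  assumes "G 0 1 = 0" "G 0 2 = 0" "G 1 0 = 0" "G 2 0 = 0"
  shows "raised_symb G \<xi> 0 = [:0, complex_of_real (G 0 0):]"
    and "m \<in> {1, 2} \<Longrightarrow> raised_symb G \<xi> m = [:\<i> * complex_of_real (G m 1 * \<xi> 1 + G m 2 * \<xi> 2):]"
  using assms by (auto simp: raised_symb_def partial_symb_def eval_nat_numeral algebra_simps)

lemma nder_normal:
  "G 1 0 = 0 \<Longrightarrow> G 2 0 = 0 \<Longrightarrow>
    nder G \<xi> f r = complex_of_real (G 0 0 / sqrt (G 0 0)) * vector_derivative f (at r)"
  by (simp add: nder_def dop_def eval_nat_numeral)

lemma lap_symb_factorization: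
  assumes metric: "inv_metric G" and normal_coords: "G 0 1 = 0" "G 0 2 = 0"
    and xi_nonzero: "\<xi> 1 \<noteq> 0 \<or> \<xi> 2 \<noteq> 0"
  shows "G 0 0 > 0 \<and> (\<exists>\<mu>>0. lap_symb G \<xi>
     = smult (complex_of_real (G 0 0)) ([:- complex_of_real \<mu>, 1:] * [:complex_of_real \<mu>, 1:]))"
proof -
  have G_normal: "G 1 0 = 0" "G 2 0 = 0"
    using inv_metric_symmetric[OF metric] normal_coords by auto
  define k where "k = (\<Sum>i<3. \<Sum>j<3. G i j * (if i = 0 then 0 else \<xi> i) * (if j = 0 then 0 else \<xi> j))"
  define \<mu> where "\<mu> = sqrt (k / G 0 0)"
  have "G 0 0 > 0"
    using inv_metric_quadratic_pos[OF metric, of "\<lambda>i. if i = 0 then 1 else 0"] by (simp add: eval_nat_numeral)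
  moreover have "\<exists>i<3. (if i = 0 then 0 else \<xi> i) \<noteq> 0"
  proof (cases "\<xi> 1 = 0")
    case True
    then show ?thesis
      using xi_nonzero by (intro exI[of _ 2]) simp
  qed (intro exI[of _ 1], simp)
  then have "k > 0"
    unfolding k_def by (rule inv_metric_quadratic_pos[OF metric])
  ultimately have "\<mu> > 0" "G 0 0 * \<mu>^2 = k"
    by (simp_all add: \<mu>_def)
  then have "complex_of_real k = complex_of_real (G 0 0) * complex_of_real \<mu> * complex_of_real \<mu>"
    by (metis mult.assoc of_real_mult power2_eq_square)
  then have "lap_symb G \<xi> = smult (complex_of_real (G 0 0)) ([:- complex_of_real \<mu>, 1:] * [:complex_of_real \<mu>, 1:])"
    unfolding lap_symb_normal[OF normal_coords G_normal] k_def[symmetric] by simp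
  with \<open>\<mu> > 0\<close> \<open>G 0 0 > 0\<close> show ?thesis
    by blast
qed

lemma divergence_twisted_normal:
  assumes "G 0 1 = 0" "G 0 2 = 0" "G 1 0 = 0" "G 2 0 = 0"
  shows "(\<Sum>m<3. twisted_op \<mu> (raised_symb G \<xi> m) [:0, 0, c m:])
    = [:0, 2 * G 0 0 * c 0, \<i> * (G 1 1 * \<xi> 1 + G 1 2 * \<xi> 2) * c 1 + \<i> * (G 2 1 * \<xi> 1 + G 2 2 * \<xi> 2) * c 2
          - G 0 0 * \<mu> * c 0:]"
proof -
  have "raised_symb G \<xi> 0 = smult (complex_of_real (G 0 0)) [:0, 1:]"
    using raised_symb_normal(1)[OF assms] by simp
  then have "twisted_op \<mu> (raised_symb G \<xi> 0) B = smult (complex_of_real (G 0 0)) (twisted_pderiv \<mu> B)" for B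
    using twisted_op_linear_factor[of \<mu> 0 B] by (simp only: twisted_op_smult) simp
  then show ?thesis
    using raised_symb_normal(2)[OF assms]
    by (simp add: eval_nat_numeral twisted_op_const twisted_pderiv_def pderiv_pCons algebra_simps)
qed

section \<open>The boundary value problem\<close>

lemma scalar_solution_eq_0:
  fixes a \<mu> :: real
  assumes "\<mu> > 0" "a \<noteq> 0"
    and L: "lap_symb G \<xi> = smult (complex_of_real a) ([:- complex_of_real \<mu>, 1:] * [:complex_of_real \<mu>, 1:])"
    and sm: "smooth_fun X" and eq_scal: "\<forall>r\<ge>0. Pscal G \<xi> X r = 0"
    and bc_X: "X 0 = 0" and bc_lapX: "lap G \<xi> X 0 = 0" and decay: "(X \<longlongrightarrow> 0) at_top"
  shows "\<forall>r\<ge>0. X r = 0"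
proof -
  have "Pscal G \<xi> X r = 2 * diffop (lap_symb G \<xi> ^ 2) X r" for r
    using sm by (simp add: Pscal_def lap_eq_diffop smooth_fun_diffop diffop_mult power2_eq_square)
  then have lap2: "\<forall>r>0. diffop (smult (complex_of_real a)
      ([:- complex_of_real \<mu>, 1:] * [:complex_of_real \<mu>, 1:]) ^ 2) X r = 0"
    using eq_scal unfolding L by simp
  obtain B where B: "(pderiv ^^ 2) B = 0" "\<forall>r>0. X r = exp_poly \<mu> 0 B r"
    using decaying_solution_exp_poly[OF assms(1) _ sm decay lap2] assms(2) by auto
  have B_eq: "B = [:coeff B 0, coeff B 1:]"
    using coeff_eq_0_if_higher_pderiv_eq_0[OF B(1)]
    by (intro poly_eqI) (auto simp: coeff_pCons numeral_2_eq_2 split: nat.split)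
  have "X 0 = poly B 0"
    using diffop_eq_exp_poly_0[OF sm B(2), of 0 "[:1:]"]
    by (simp add: diffop_const_1 twisted_op_const exp_poly_0_at_0)
  moreover have "lap G \<xi> X 0 = poly (twisted_op \<mu> (lap_symb G \<xi>) B) 0"
    using diffop_eq_exp_poly_0[OF sm B(2), of 0] by (simp add: lap_eq_diffop[OF sm] exp_poly_0_at_0)
  ultimately have "coeff B 0 = 0" "2 * a * complex_of_real \<mu> * coeff B 1 = 0"
    using bc_X bc_lapX coeff_eq_0_if_higher_pderiv_eq_0[OF B(1), of 2] unfolding L twisted_op_lap_factorized
    by (simp_all add: poly_0_coeff_0 coeff_pderiv numeral_2_eq_2)
  then have "B = 0"
    using B_eq assms(1,2) by simp
  then show ?thesis
    using B(2) bc_X by (auto simp: exp_poly_def less_eq_real_def)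
qed

lemma vector_solution_shape:
  fixes a \<mu> :: real
  assumes mu: "\<mu> > 0" and a: "a \<noteq> 0" and aG: "G 0 0 = a"
    and L: "lap_symb G \<xi> = smult (complex_of_real a) ([:- complex_of_real \<mu>, 1:] * [:complex_of_real \<mu>, 1:])"
    and G_sym: "\<forall>i<3. \<forall>j<3. G i j = G j i" and G_normal: "G 1 0 = 0" "G 2 0 = 0"
    and sm: "\<forall>i<3. smooth_fun (Xs i)"
    and eq_vec: "\<forall>i<3. \<forall>r\<ge>0. Pvec G \<xi> Xs i r = 0"
    and bc_Xi: "\<forall>i<3. Xs i 0 = 0" and bc_dXi: "\<forall>i<3. nder G \<xi> (Xs i) 0 = 0"
    and decay_Xi: "\<forall>i<3. (Xs i \<longlongrightarrow> 0) at_top"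
  shows "\<exists>c. \<forall>m<3. \<forall>r>0. Xs m r = exp_poly \<mu> 0 [:0, 0, c m:] r"
proof -
  have "\<exists>c. \<forall>r>0. Xs m r = exp_poly \<mu> 0 [:0, 0, c:] r" if m: "m < 3" for m
  proof (rule decaying_solution_vanishing_at_0[OF mu])
    show "\<forall>r>0. diffop (smult (complex_of_real a) ([:- complex_of_real \<mu>, 1:] * [:complex_of_real \<mu>, 1:]) ^ 3) (Xs m) r = 0"
      using lap_cube_vector_solution_eq_0[OF G_sym sm eq_vec m] unfolding L by blast
    show "vector_derivative (Xs m) (at 0) = 0"
      using bc_dXi m a aG by (simp add: nder_normal[of G, OF G_normal])
  qed (use a sm decay_Xi bc_Xi m in auto)
  then have "\<forall>m. \<exists>c. m < 3 \<longrightarrow> (\<forall>r>0. Xs m r = exp_poly \<mu> 0 [:0, 0, c:] r)"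
    by blast
  then show ?thesis
    by metis
qed

lemma vector_equations_twisted:
  assumes G_sym: "\<forall>i<3. \<forall>j<3. G i j = G j i" and sm: "\<forall>i<3. smooth_fun (Xs i)"
    and eq_vec: "\<forall>i<3. \<forall>r\<ge>0. Pvec G \<xi> Xs i r = 0"
    and c: "\<forall>m<3. \<forall>r>0. Xs m r = exp_poly \<mu> 0 [:0, 0, c m:] r" and i: "i < 3"
  shows "smult 3 (twisted_op \<mu> (partial_symb \<xi> i * lap_symb G \<xi>)
            (\<Sum>m<3. twisted_op \<mu> (raised_symb G \<xi> m) [:0, 0, c m:]))
          + twisted_op \<mu> (lap_symb G \<xi> ^ 2) [:0, 0, c i:] = 0"
    (is "?E = 0")
proof (rule exp_poly_0_eq_0_imp[of \<mu>], intro allI impI)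
  fix r :: real
  assume r: "r > 0"
  let ?V = "\<Sum>m<3. twisted_op \<mu> (raised_symb G \<xi> m) [:0, 0, c m:]"
  have Xs_diffop: "diffop p (Xs m) s = exp_poly \<mu> 0 (twisted_op \<mu> p [:0, 0, c m:]) s"
    if "m < 3" "s > 0" for p m s
    using c that diffop_cong_pos[of "Xs m" "exp_poly \<mu> 0 [:0, 0, c m:]" s p] by (simp add: diffop_exp_poly_0)
  then have "\<forall>s>0. diffop_vec (raised_symb G \<xi>) Xs s = exp_poly \<mu> 0 ?V s"
    by (simp add: diffop_vec_def exp_poly_0_sum)
  from diffop_cong_pos[OF this r]
  have "diffop q (diffop_vec (raised_symb G \<xi>) Xs) r = exp_poly \<mu> 0 (twisted_op \<mu> q ?V) r" for q
    by (simp add: diffop_exp_poly_0)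
  then have "exp_poly \<mu> 0 ?E r
      = 3 * diffop (partial_symb \<xi> i * lap_symb G \<xi>) (diffop_vec (raised_symb G \<xi>) Xs) r
        + diffop (lap_symb G \<xi> ^ 2) (Xs i) r"
    by (simp add: Xs_diffop[OF i r] exp_poly_0_add exp_poly_0_smult)
  also have "\<dots> = 2 * Pvec G \<xi> Xs i r"
    using Pvec_eq_divergence[OF G_sym sm i] by simp
  finally show "exp_poly \<mu> 0 ?E r = 0"
    using eq_vec i r by simp
qed

lemma vector_solution_eq_0:
  fixes a \<mu> :: real
  assumes mu: "\<mu> > 0" and a: "a \<noteq> 0" and aG: "G 0 0 = a"
    and L: "lap_symb G \<xi> = smult (complex_of_real a) ([:- complex_of_real \<mu>, 1:] * [:complex_of_real \<mu>, 1:])"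
    and G_sym: "\<forall>i<3. \<forall>j<3. G i j = G j i" and nc: "G 0 1 = 0" "G 0 2 = 0"
    and sm: "\<forall>i<3. smooth_fun (Xs i)"
    and eq_vec: "\<forall>i<3. \<forall>r\<ge>0. Pvec G \<xi> Xs i r = 0"
    and bc_Xi: "\<forall>i<3. Xs i 0 = 0" and bc_dXi: "\<forall>i<3. nder G \<xi> (Xs i) 0 = 0"
    and decay_Xi: "\<forall>i<3. (Xs i \<longlongrightarrow> 0) at_top"
  shows "\<forall>i<3. \<forall>r\<ge>0. Xs i r = 0"
proof -
  have G_normal: "G 1 0 = 0" "G 2 0 = 0"
    using G_sym nc by auto
  obtain c where c: "\<forall>m<3. \<forall>r>0. Xs m r = exp_poly \<mu> 0 [:0, 0, c m:] r"
    using vector_solution_shape[OF mu a aG L G_sym G_normal sm eq_vec bc_Xi bc_dXi decay_Xi] by blast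
  \<comment> \<open>the quadratic coefficient of div X\<close>
  define e where "e = \<i> * (G 1 1 * \<xi> 1 + G 1 2 * \<xi> 2) * c 1 + \<i> * (G 2 1 * \<xi> 1 + G 2 2 * \<xi> 2) * c 2
      - a * \<mu> * c 0"
  have div: "(\<Sum>m<3. twisted_op \<mu> (raised_symb G \<xi> m) [:0, 0, c m:]) = [:0, 2 * a * c 0, e:]"
    using divergence_twisted_normal[OF nc G_normal] by (simp add: e_def aG)
  note E = vector_equations_twisted[OF G_sym sm eq_vec c, unfolded div]
  have twisted_lap: "twisted_op \<mu> (lap_symb G \<xi>) B
      = smult (complex_of_real a) (pderiv (pderiv B) - smult (2 * complex_of_real \<mu>) (pderiv B))" for B
    unfolding L by (rule twisted_op_lap_factorized)
  have twisted_lap2: "twisted_op \<mu> (lap_symb G \<xi> ^ 2) [:0, 0, x:] = [:8 * a^2 * \<mu>^2 * x:]" for x :: complex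
    by (simp add: twisted_op_mult power2_eq_square twisted_lap pderiv_pCons algebra_simps)
  have "12 * a * \<mu>^2 * e = 0 \<and> 20 * a^2 * \<mu>^2 * c 0 - 18 * a * \<mu> * e = 0"
    using E[of 0]
    by (simp add: twisted_op_mult twisted_lap twisted_lap2 twisted_op_partial_symb twisted_pderiv_def
        pderiv_pCons power2_eq_square algebra_simps)
  then have "e = 0" "c 0 = 0"
    using mu a by auto
  have "c m = 0" if "m \<in> {1, 2}" for m
  proof -
    have "twisted_op \<mu> (lap_symb G \<xi> ^ 2) [:0, 0, c m:] = 0"
      using E[of m] that \<open>e = 0\<close> \<open>c 0 = 0\<close> by auto
    then have "[:8 * a^2 * \<mu>^2 * c m:] = 0"
      by (simp only: twisted_lap2)
    then show ?thesis
      using mu a by simp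
  qed
  with \<open>c 0 = 0\<close> have "c m = 0" if "m < 3" for m
    using that by (auto simp: less_Suc_eq eval_nat_numeral)
  then show ?thesis
    using c bc_Xi by (auto simp: exp_poly_def less_eq_real_def)
qed

theorem lemma4:
  fixes G :: "nat \<Rightarrow> nat \<Rightarrow> real" and \<xi> :: "nat \<Rightarrow> real"
    and X :: "real \<Rightarrow> complex" and Xs :: "nat \<Rightarrow> real \<Rightarrow> complex"
  assumes metric: "inv_metric G"
    and normal_coords: "G 0 1 = 0" "G 0 2 = 0"
    and xi_nonzero: "\<xi> 1 \<noteq> 0 \<or> \<xi> 2 \<noteq> 0"
    and smooth: "smooth_fun X" "\<forall>i<3. smooth_fun (Xs i)"
    and eq_scal: "\<forall>r\<ge>0. Pscal G \<xi> X r = 0"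
    and eq_vec: "\<forall>i<3. \<forall>r\<ge>0. Pvec G \<xi> Xs i r = 0"
    and bc_X: "X 0 = 0"
    and bc_lapX: "lap G \<xi> X 0 = 0"
    and bc_Xi: "\<forall>i<3. Xs i 0 = 0"
    and bc_dXi: "\<forall>i<3. nder G \<xi> (Xs i) 0 = 0"
    and decay_X: "(X \<longlongrightarrow> 0) at_top"
    and decay_Xi: "\<forall>i<3. (Xs i \<longlongrightarrow> 0) at_top"
  shows "(\<forall>r\<ge>0. X r = 0) \<and> (\<forall>i<3. \<forall>r\<ge>0. Xs i r = 0)"
proof -
  obtain \<mu> where "G 0 0 > 0" "\<mu> > 0"
    and L: "lap_symb G \<xi> = smult (complex_of_real (G 0 0)) ([:- complex_of_real \<mu>, 1:] * [:complex_of_real \<mu>, 1:])"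
    using lap_symb_factorization[OF metric normal_coords xi_nonzero] by blast
  then have "G 0 0 \<noteq> 0"
    by simp
  show ?thesis
    using scalar_solution_eq_0[OF \<open>\<mu> > 0\<close> \<open>G 0 0 \<noteq> 0\<close> L smooth(1) eq_scal bc_X bc_lapX decay_X]
      vector_solution_eq_0[OF \<open>\<mu> > 0\<close> \<open>G 0 0 \<noteq> 0\<close> refl L inv_metric_symmetric[OF metric]
        normal_coords smooth(2) eq_vec bc_Xi bc_dXi decay_Xi]
    by blast
qed

end
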